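(* Let $(X,\cdot)$ be a Rump right quasigroup and let $R: X\times X \to X \times X$, $R(x,y) = (y(x/y),\, x/y)$, with $\nu(x,y) = y(x/y)$ and $\mu(x,y) = x/y$ its two components. Let $(C^{YB}_n(X), \partial^{YB}_n)$ be the set-theoretic Yang-Baxter chain complex of $R$ (defined in the context), and for $n \ge 2$ let $C^D_n(X) \subseteq C^{YB}_n(X)$ be the subgroup spanned by all tuples of the form $(x_1,\ldots,x_{i-1}, x_i x_i, x_i, x_{i+1},\ldots,x_{n-1})$ with $1 \le i \le n-1$ and $x_1,\ldots,x_{n-1}\in X$, and let $C^D_n(X) = 0$ for $n \le 1$. Then $\partial^{YB}_n\bigl(C^D_n(X)\bigr) \subseteq C^D_{n-1}(X)$ for all $n$, i.e. $(C^D_n(X), \partial^{YB}_n)$ is a sub-chain complex of $(C^{YB}_n(X),\partial^{YB}_n)$.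
   Context: A right quasigroup is a magma in which every right translation $y\mapsto yx$ is bijective; $x/y$ denotes the unique $w$ with $wy=x$. A Rump right quasigroup is a right quasigroup with $(zx)(yx)=(zy)(xy)$ for all $x,y,z$. Set-theoretic Yang-Baxter chain complex: $C^{YB}_n(X)$ is the free abelian group on $X^n$ ($n\ge 0$; $X^0$ is a single point). For $1\le i\le n$ define face maps $d^l_{i,n}, d^r_{i,n}: X^n \to X^{n-1}$ (extended linearly) as follows. $d^l_{1,n}$ deletes the first coordinate; for $i\ge 2$, $d^l_{i,n}$ applies $R$ to the coordinates in positions $(i-1,i)$, then to positions $(i-2,i-1)$, ..., then to positions $(2,3)$, and finally replaces the first two coordinates $(a,b)$ by the single coordinate $\mu(a,b)$; i.e. $d^l_{i,n} = (\mu \times \mathrm{Id}^{\times(n-2)})\circ(\mathrm{Id}\times R\times \mathrm{Id}^{\times(n-3)})\circ\cdots\circ(\mathrm{Id}^{\times(i-2)}\times R\times\mathrm{Id}^{\times(n-i)})$. Symmetrically, $d^r_{n,n}$ deletes the last coordinate; for $i \le n-1$, $d^r_{i,n} = (\mathrm{Id}^{\times(n-2)}\times\nu)\circ(\mathrm{Id}^{\times(n-3)}\times R\times\mathrm{Id})\circ\cdots\circ(\mathrm{Id}^{\times(i-1)}\times R\times \mathrm{Id}^{\times(n-i-1)})$, i.e. apply $R$ at positions $(i,i+1)$, then $(i+1,i+2)$, ..., $(n-2,n-1)$, then replace the last two coordinates $(a,b)$ by $\nu(a,b)$. The boundary is $\partial^{YB}_n = \sum_{i=1}^n (-1)^{i+1}(d^l_{i,n}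 - d^r_{i,n})$; it satisfies $\partial^{YB}_{n-1}\circ\partial^{YB}_n = 0$. For example $\partial^{YB}_3(x,y,z) = (y,z) - (y(x/y), z((x/y)/z)) - (x/y,z) + (x, z(y/z)) + (x/(z(y/z)), y/z) - (x,y)$. *)

theory Defs
  imports Main "HOL-Library.Poly_Mapping"
begin

definition right_quasigroup :: "('a \<Rightarrow> 'a \<Rightarrow> 'a) \<Rightarrow> bool" where
  "right_quasigroup m \<longleftrightarrow> (\<forall>x. bij (\<lambda>y. m y x))"

definition rdiv :: "('a \<Rightarrow> 'a \<Rightarrow> 'a) \<Rightarrow> 'a \<Rightarrow> 'a \<Rightarrow> 'a" where
  "rdiv m x y = (THE w. m w y = x)"

definition rump_right_quasigroup :: "('a \<Rightarrow> 'a \<Rightarrow> 'a) \<Rightarrow> bool" where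
  "rump_right_quasigroup m \<longleftrightarrow> right_quasigroup m \<and>
     (\<forall>x y z. m (m z x) (m y x) = m (m z y) (m x y))"

definition nu :: "('a \<Rightarrow> 'a \<Rightarrow> 'a) \<Rightarrow> 'a \<Rightarrow> 'a \<Rightarrow> 'a" where
  "nu m x y = m y (rdiv m x y)"

definition mu :: "('a \<Rightarrow> 'a \<Rightarrow> 'a) \<Rightarrow> 'a \<Rightarrow> 'a \<Rightarrow> 'a" where
  "mu m x y = rdiv m x y"

text \<open>Apply R at the (1-based) positions (j, j+1) of a tuple (list).\<close>

definition R_at :: "('a \<Rightarrow> 'a \<Rightarrow> 'a) \<Rightarrow> nat \<Rightarrow> 'a list \<Rightarrow> 'a list" where
  "R_at m j xs = (let a = xs ! (j - 1); b = xs ! j in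
      take (j - 1) xs @ [nu m a b, mu m a b] @ drop (j + 1) xs)"

definition dl :: "('a \<Rightarrow> 'a \<Rightarrow> 'a) \<Rightarrow> nat \<Rightarrow> 'a list \<Rightarrow> 'a list" where
  "dl m i xs = (if i = 1 then tl xs else
      (let ys = fold (R_at m) (rev [2..<i]) xs in mu m (ys ! 0) (ys ! 1) # drop 2 ys))"

definition dr :: "('a \<Rightarrow> 'a \<Rightarrow> 'a) \<Rightarrow> nat \<Rightarrow> 'a list \<Rightarrow> 'a list" where
  "dr m i xs = (if i = length xs then butlast xs else
      (let ys = fold (R_at m) [i..<length xs - 1] xs; n = length ys in
         take (n - 2) ys @ [nu m (ys ! (n - 2)) (ys ! (n - 1))]))"

definition boundary_gen :: "('a \<Rightarrow> 'a \<Rightarrow> 'a) \<Rightarrow> nat \<Rightarrow> 'a list \<Rightarrow> 'a list \<Rightarrow>\<^sub>0 int" where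
  "boundary_gen m n xs = (\<Sum>i\<in>{1..n}. frag_cmul ((-1) ^ (i + 1)) (frag_of (dl m i xs) - frag_of (dr m i xs)))"

definition YB_boundary :: "('a \<Rightarrow> 'a \<Rightarrow> 'a) \<Rightarrow> nat \<Rightarrow> ('a list \<Rightarrow>\<^sub>0 int) \<Rightarrow> 'a list \<Rightarrow>\<^sub>0 int" where
  "YB_boundary m n c = frag_extend (boundary_gen m n) c"

definition C_YB :: "nat \<Rightarrow> ('a list \<Rightarrow>\<^sub>0 int) set" where
  "C_YB n = {c. \<forall>t \<in> Poly_Mapping.keys c. length t = n}"

inductive_set span_gen :: "'b set \<Rightarrow> ('b \<Rightarrow>\<^sub>0 int) set" for S where
  zero: "0 \<in> span_gen S"
| gen: "t \<in> S \<Longrightarrow> frag_of t \<in> span_gen S"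
| neg: "c \<in> span_gen S \<Longrightarrow> - c \<in> span_gen S"
| add: "c \<in> span_gen S \<Longrightarrow> d \<in> span_gen S \<Longrightarrow> c + d \<in> span_gen S"

definition D_gens :: "('a \<Rightarrow> 'a \<Rightarrow> 'a) \<Rightarrow> nat \<Rightarrow> 'a list set" where
  "D_gens m n = {take (i - 1) xs @ [m (xs ! (i - 1)) (xs ! (i - 1)), xs ! (i - 1)] @ drop i xs
                   | xs i. 2 \<le> n \<and> length xs = n - 1 \<and> 1 \<le> i \<and> i \<le> n - 1}"

definition C_D :: "('a \<Rightarrow> 'a \<Rightarrow> 'a) \<Rightarrow> nat \<Rightarrow> ('a list \<Rightarrow>\<^sub>0 int) set" where
  "C_D m n = (if 2 \<le> n then span_gen (D_gens m n) else {0})"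

end

theory Submission
  imports Defs
begin

text \<open>A generator of \<open>C\<^sup>D\<^sub>n\<close> contains a degenerate pair \<open>(x x, x)\<close>, which \<open>R\<close> fixes because
  \<open>(x x)/x = x\<close>. So the two faces indexed by the positions of the pair coincide, for \<open>d\<^sup>l\<close> as well
  as for \<open>d\<^sup>r\<close>, and cancel in the alternating sum. Every other face is again degenerate: it either
  leaves the pair alone or carries one neighbour \<open>c\<close> across it, and then the Rump identity
  \<open>(z x)(y x) = (z y)(x y)\<close> makes a new degenerate pair \<open>(u u, u)\<close> appear, with \<open>u = x/c\<close> when
  \<open>c\<close> comes from the right and \<open>u = x (t/x)\<close>, \<open>t = c/(x x)\<close>, when it comes from the left.\<close>

lemma length_R_at: "0 < k \<Longrightarrow> k < length xs \<Longrightarrow> length (R_at m k xs) = length xs"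
  unfolding R_at_def Let_def by simp

lemma nth_R_at:
  assumes "0 < k" "k < length xs" "l < length xs"
  shows "R_at m k xs ! l =
    (if l = k - 1 then nu m (xs ! (k - 1)) (xs ! k)
     else if l = k then mu m (xs ! (k - 1)) (xs ! k) else xs ! l)"
  using assms unfolding R_at_def Let_def
  by (auto simp: nth_append min_def nth_Cons' Suc_diff_le)

lemma length_fold_R_at:
  "\<forall>k \<in> set ks. 0 < k \<and> k < length xs \<Longrightarrow> length (fold (R_at m) ks xs) = length xs"
  by (induction ks arbitrary: xs) (auto simp: length_R_at)

lemma upt_split_pair:
  assumes "i \<le> j" "Suc j < k"
  shows "[i..<k] = [i..<j] @ [j, Suc j] @ [Suc (Suc j)..<k]"
proof -
  have "[i..<k] = [i..<j] @ [j..<k]"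
    using upt_add_eq_append[of i j "k - j"] assms by simp
  then show ?thesis
    using assms by (simp add: upt_conv_Cons)
qed

lemma mult_rdiv:
  assumes "right_quasigroup m"
  shows "m (rdiv m x y) y = x"
proof -
  have "bij (\<lambda>w. m w y)"
    using assms unfolding right_quasigroup_def by blast
  then have "\<exists>!w. m w y = x"
    by (metis bij_iff)
  then show ?thesis
    unfolding rdiv_def by (rule theI')
qed

lemma rdiv_mult:
  assumes "right_quasigroup m"
  shows "rdiv m (m w y) y = w"
proof -
  have "inj (\<lambda>w. m w y)"
    using assms unfolding right_quasigroup_def by (blast intro: bij_is_inj)
  then show ?thesis
    using mult_rdiv[OF assms, of "m w y" y] by (meson injD)
qed

lemma mu_square: "right_quasigroup m \<Longrightarrow> mu m (m a a) a = a"
  unfolding mu_def by (rule rdiv_mult)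

lemma nu_square: "right_quasigroup m \<Longrightarrow> nu m (m a a) a = m a a"
  unfolding nu_def by (simp add: rdiv_mult)

text \<open>The pair \<open>(x x, x)\<close> sits at the 1-based positions \<open>k, k + 1\<close>, the convention of \<^const>\<open>R_at\<close>.\<close>

definition degenerate_at :: "('a \<Rightarrow> 'a \<Rightarrow> 'a) \<Rightarrow> nat \<Rightarrow> 'a list \<Rightarrow> bool" where
  "degenerate_at m k xs \<longleftrightarrow> 0 < k \<and> k < length xs \<and> xs ! (k - 1) = m (xs ! k) (xs ! k)"

lemma D_gens_eq: "D_gens m n = {xs. length xs = n \<and> (\<exists>k. degenerate_at m k xs)}"
proof (intro set_eqI iffI)
  fix t
  assume "t \<in> D_gens m n"
  then obtain xs i where t: "t = take (i - 1) xs @ [m (xs ! (i - 1)) (xs ! (i - 1)), xs ! (i - 1)] @ drop i xs"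
    and i: "length xs = n - 1" "1 \<le> i" "i \<le> n - 1"
    unfolding D_gens_def by blast
  have "degenerate_at m i t"
    unfolding degenerate_at_def t using i by (auto simp: nth_append)
  then show "t \<in> {xs. length xs = n \<and> (\<exists>k. degenerate_at m k xs)}"
    using t i by auto
next
  fix t
  assume "t \<in> {xs. length xs = n \<and> (\<exists>k. degenerate_at m k xs)}"
  then obtain k where n: "length t = n" and k: "degenerate_at m k t"
    by blast
  define xs where "xs = take (k - 1) t @ drop k t"
  have k_bounds: "0 < k" "k < length t"
    using k unfolding degenerate_at_def by auto
  have "xs ! (k - 1) = t ! k" "take (k - 1) xs = take (k - 1) t" "drop k xs = drop (Suc k) t"
    using k_bounds unfolding xs_def by (auto simp: nth_append min_def)
  moreover have "t = take (k - 1) t @ [t ! (k - 1), t ! k] @ drop (Suc k) t"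
    using k_bounds id_take_nth_drop[of "k - 1" t] by (simp add: Cons_nth_drop_Suc)
  ultimately have "t = take (k - 1) xs @ [m (xs ! (k - 1)) (xs ! (k - 1)), xs ! (k - 1)] @ drop k xs"
    using k unfolding degenerate_at_def by simp
  moreover have "2 \<le> n" "length xs = n - 1" "1 \<le> k" "k \<le> n - 1"
    using k n unfolding xs_def degenerate_at_def by auto
  ultimately show "t \<in> D_gens m n"
    unfolding D_gens_def by blast
qed

lemma R_at_degenerate_at:
  assumes "right_quasigroup m" "degenerate_at m k xs"
  shows "R_at m k xs = xs"
  using assms by (intro nth_equalityI)
    (auto simp: degenerate_at_def length_R_at nth_R_at mu_square nu_square)

lemma degenerate_at_R_at_far:
  assumes "degenerate_at m i xs" "0 < k" "k < length xs" "Suc k < i \<or> Suc i < k"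
  shows "degenerate_at m i (R_at m k xs)"
  using assms by (auto simp: degenerate_at_def length_R_at nth_R_at)

lemma degenerate_at_fold_R_at_far:
  assumes "\<forall>k \<in> set ks. 0 < k \<and> k < length xs \<and> (Suc k < i \<or> Suc i < k)"
    and "degenerate_at m i xs"
  shows "degenerate_at m i (fold (R_at m) ks xs)"
  using assms by (induction ks arbitrary: xs) (auto simp: degenerate_at_R_at_far length_R_at)

lemma degenerate_at_tl: "degenerate_at m (Suc i) xs \<Longrightarrow> 0 < i \<Longrightarrow> degenerate_at m i (tl xs)"
  by (auto simp: degenerate_at_def nth_tl)

lemma degenerate_at_butlast:
  "degenerate_at m i xs \<Longrightarrow> Suc i < length xs \<Longrightarrow> degenerate_at m i (butlast xs)"
  by (auto simp: degenerate_at_def nth_butlast)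

text \<open>Merging the first two coordinates by \<open>\<mu>\<close> is \<open>R\<close> at position 1 followed by \<^const>\<open>tl\<close>, and
  dually for \<open>\<nu>\<close> and \<^const>\<open>butlast\<close>; so each face map is a single run of \<open>R\<close>-moves.\<close>

lemma dl_eq_tl_fold:
  assumes "0 < j"
  shows "dl m j xs = tl (fold (R_at m) (rev [1..<j]) xs)"
proof (cases "j = 1")
  case False
  then have "rev [1..<j] = rev [2..<j] @ [1]"
    using assms by (simp add: upt_conv_Cons numeral_2_eq_2)
  then show ?thesis
    using False by (simp add: dl_def R_at_def Let_def numeral_2_eq_2)
qed (simp add: dl_def)

lemma dr_eq_butlast_fold:
  assumes "0 < j" "j \<le> length xs"
  shows "dr m j xs = butlast (fold (R_at m) [j..<length xs] xs)"
proof (cases "j = length xs")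
  case False
  define ys where "ys = fold (R_at m) [j..<length xs - 1] xs"
  have "length xs = Suc (length xs - 1)" "j \<le> length xs - 1"
    using assms False by auto
  then have "[j..<length xs] = [j..<length xs - 1] @ [length xs - 1]"
    by (metis upt_Suc_append)
  moreover have "length ys = length xs"
    unfolding ys_def using assms by (intro length_fold_R_at) auto
  ultimately have "fold (R_at m) [j..<length xs] xs = R_at m (length xs - 1) ys"
    unfolding ys_def by simp
  then show ?thesis
    using assms False \<open>length ys = length xs\<close> unfolding dr_def Let_def ys_def[symmetric]
    by (simp add: R_at_def Let_def butlast_append numeral_2_eq_2)
qed (simp add: dr_def)

lemma length_dl: "0 < j \<Longrightarrow> j \<le> length xs \<Longrightarrow> length (dl m j xs) = length xs - 1"
  by (simp add: dl_eq_tl_fold length_fold_R_at)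

lemma length_dr: "0 < j \<Longrightarrow> j \<le> length xs \<Longrightarrow> length (dr m j xs) = length xs - 1"
  by (simp add: dr_eq_butlast_fold length_fold_R_at)

lemma dl_degenerate_pair:
  assumes "right_quasigroup m" "degenerate_at m i xs"
  shows "dl m (Suc i) xs = dl m i xs"
proof -
  have "rev [1..<Suc i] = i # rev [1..<i]"
    using assms(2) unfolding degenerate_at_def by simp
  then show ?thesis
    using assms by (simp add: dl_eq_tl_fold R_at_degenerate_at degenerate_at_def)
qed

lemma dr_degenerate_pair:
  assumes "right_quasigroup m" "degenerate_at m i xs"
  shows "dr m i xs = dr m (Suc i) xs"
proof -
  have "[i..<length xs] = i # [Suc i..<length xs]"
    using assms(2) unfolding degenerate_at_def by (simp add: upt_conv_Cons)
  then show ?thesis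
    using assms by (simp add: dr_eq_butlast_fold R_at_degenerate_at degenerate_at_def)
qed

lemma span_gen_eq: "span_gen S = {c. Poly_Mapping.keys c \<subseteq> S}"
proof (intro set_eqI iffI)
  show "c \<in> {c. Poly_Mapping.keys c \<subseteq> S}" if "c \<in> span_gen S" for c
    using that by induction (auto simp: keys_frag_of dest: subsetD[OF keys_add])
  show "c \<in> span_gen S" if "c \<in> {c. Poly_Mapping.keys c \<subseteq> S}" for c
    using that[simplified]
  proof (induction c rule: frag_induction)
    case (diff a b)
    then show ?case
      by (metis diff_conv_add_uminus span_gen.add span_gen.neg)
  qed (auto intro: span_gen.intros)
qed

lemma C_D_eq_span_gen: "C_D m n = span_gen (D_gens m n)"
  by (auto simp: C_D_def D_gens_def span_gen_eq)

lemma sum_cancel_pair: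
  assumes "finite A" "i \<in> A" "k \<in> A" "i \<noteq> k" "f i + f k = 0"
  shows "sum f A = sum f (A - {i, k})"
  using assms sum.subset_diff[of "{i, k}" A f] by simp

context
  fixes m :: "'a \<Rightarrow> 'a \<Rightarrow> 'a"
  assumes rump: "rump_right_quasigroup m"
begin

lemma rump_is_right_quasigroup: "right_quasigroup m"
  using rump unfolding rump_right_quasigroup_def by blast

lemma rump_identity: "m (m z x) (m y x) = m (m z y) (m x y)"
  using rump unfolding rump_right_quasigroup_def by blast

lemma mu_square_nu: "mu m (m a a) (nu m a c) = m (mu m a c) (mu m a c)"
proof -
  define u where "u = mu m a c"
  have "a = m u c"
    unfolding u_def mu_def by (simp add: mult_rdiv[OF rump_is_right_quasigroup])
  then have "m a a = m (m u u) (m c u)"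
    using rump_identity[of u u c] by simp
  moreover have "nu m a c = m c u"
    unfolding nu_def u_def mu_def ..
  ultimately have "mu m (m a a) (nu m a c) = m u u"
    by (simp add: mu_def rdiv_mult[OF rump_is_right_quasigroup])
  then show ?thesis
    unfolding u_def .
qed

lemma nu_right_square:
  "nu m c (m a a) = m (nu m (mu m c (m a a)) a) (nu m (mu m c (m a a)) a)"
proof -
  define t where "t = mu m c (m a a)"
  define s where "s = mu m t a"
  have "t = m s a"
    unfolding s_def mu_def by (simp add: mult_rdiv[OF rump_is_right_quasigroup])
  then have "m (m a a) t = m (m a s) (m a s)"
    using rump_identity[of a a s] by simp
  moreover have "nu m t a = m a s"
    unfolding nu_def s_def mu_def ..
  ultimately show ?thesis
    unfolding t_def[symmetric] by (simp add: nu_def t_def mu_def)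
qed

lemma degenerate_at_pass_right:
  assumes "degenerate_at m i xs" "Suc i < length xs"
  shows "degenerate_at m (Suc i) (R_at m i (R_at m (Suc i) xs))"
  using assms by (auto simp: degenerate_at_def length_R_at nth_R_at mu_square_nu)

lemma degenerate_at_pass_left:
  assumes "degenerate_at m (Suc i) xs" "0 < i"
  shows "degenerate_at m i (R_at m (Suc i) (R_at m i xs))"
  using assms by (auto simp: degenerate_at_def length_R_at nth_R_at nu_right_square)

lemma dl_degenerate:
  assumes "degenerate_at m i xs" "0 < j" "j \<le> length xs" "j \<noteq> i" "j \<noteq> Suc i"
  shows "\<exists>i'. degenerate_at m i' (dl m j xs)"
proof (cases "j < i")
  case True
  have "degenerate_at m (Suc (i - 1)) (fold (R_at m) (rev [1..<j]) xs)"
    using assms True by (intro degenerate_at_fold_R_at_far) auto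
  then have "degenerate_at m (i - 1) (dl m j xs)"
    using assms(2) True by (simp add: dl_eq_tl_fold degenerate_at_tl)
  then show ?thesis ..
next
  case False
  then have i: "0 < i" "Suc i < j"
    using assms unfolding degenerate_at_def by auto
  have split: "rev [1..<j] = rev [Suc (Suc i)..<j] @ [Suc i, i] @ rev [1..<i]"
    using upt_split_pair[of 1 i j] i by simp
  define ys where "ys = fold (R_at m) (rev [Suc (Suc i)..<j]) xs"
  have ys: "degenerate_at m i ys" "length ys = length xs"
    unfolding ys_def using assms by (auto intro: degenerate_at_fold_R_at_far length_fold_R_at)
  define zs where "zs = R_at m i (R_at m (Suc i) ys)"
  have zs: "degenerate_at m (Suc i) zs" "length zs = length xs"
    unfolding zs_def using ys i assms(3) by (auto intro: degenerate_at_pass_right simp: length_R_at)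
  have "degenerate_at m (Suc i) (fold (R_at m) (rev [1..<i]) zs)"
    using zs i assms(3) by (intro degenerate_at_fold_R_at_far) auto
  moreover have "dl m j xs = tl (fold (R_at m) (rev [1..<i]) zs)"
    unfolding dl_eq_tl_fold[OF assms(2)] split by (simp add: ys_def zs_def)
  ultimately show ?thesis
    using i by (auto dest: degenerate_at_tl)
qed

lemma dr_degenerate:
  assumes "degenerate_at m i xs" "0 < j" "j \<le> length xs" "j \<noteq> i" "j \<noteq> Suc i"
  shows "\<exists>i'. degenerate_at m i' (dr m j xs)"
proof (cases "j < i")
  case False
  then have "Suc i < j"
    using assms by simp
  then have "degenerate_at m i (fold (R_at m) [j..<length xs] xs)"
    using assms by (intro degenerate_at_fold_R_at_far) auto
  then have "degenerate_at m i (dr m j xs)"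
    using assms \<open>Suc i < j\<close> by (simp add: dr_eq_butlast_fold degenerate_at_butlast length_fold_R_at)
  then show ?thesis ..
next
  case True
  then obtain i0 where i: "i = Suc i0" "j \<le> i0"
    by (cases i) auto
  have i0: "0 < i0" "Suc i0 < length xs"
    using i assms unfolding degenerate_at_def by auto
  have split: "[j..<length xs] = [j..<i0] @ [i0, Suc i0] @ [Suc (Suc i0)..<length xs]"
    using upt_split_pair[of j i0 "length xs"] i i0 by simp
  define ys where "ys = fold (R_at m) [j..<i0] xs"
  have ys: "degenerate_at m (Suc i0) ys" "length ys = length xs"
    unfolding ys_def using assms i i0 by (auto intro: degenerate_at_fold_R_at_far length_fold_R_at)
  define zs where "zs = R_at m (Suc i0) (R_at m i0 ys)"
  have zs: "degenerate_at m i0 zs" "length zs = length xs"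
    unfolding zs_def using ys i0 by (auto intro: degenerate_at_pass_left simp: length_R_at)
  have "degenerate_at m i0 (fold (R_at m) [Suc (Suc i0)..<length xs] zs)"
    using zs i0 by (intro degenerate_at_fold_R_at_far) auto
  moreover have "dr m j xs = butlast (fold (R_at m) [Suc (Suc i0)..<length xs] zs)"
    unfolding dr_eq_butlast_fold[OF assms(2,3)] split by (simp add: ys_def zs_def)
  ultimately show ?thesis
    using i0 zs by (auto dest: degenerate_at_butlast simp: length_fold_R_at)
qed

lemma keys_boundary_gen_D_gens:
  assumes "t \<in> D_gens m n"
  shows "Poly_Mapping.keys (boundary_gen m n t) \<subseteq> D_gens m (n - 1)"
proof -
  obtain i where n: "length t = n" and i: "degenerate_at m i t"
    using assms unfolding D_gens_eq by blast
  define f where "f j = frag_cmul ((-1) ^ (j + 1)) (frag_of (dl m j t) - frag_of (dr m j t))" for j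
  have "dl m (Suc i) t = dl m i t" "dr m (Suc i) t = dr m i t"
    using dl_degenerate_pair dr_degenerate_pair rump_is_right_quasigroup i by metis+
  then have "f i + f (Suc i) = 0"
    unfolding f_def by (simp flip: frag_cmul_distrib)
  moreover have "i \<in> {1..n}" "Suc i \<in> {1..n}"
    using i n unfolding degenerate_at_def by auto
  ultimately have boundary: "boundary_gen m n t = sum f ({1..n} - {i, Suc i})"
    unfolding boundary_gen_def f_def[symmetric] by (intro sum_cancel_pair) auto
  have "Poly_Mapping.keys (f j) \<subseteq> D_gens m (n - 1)" if "j \<in> {1..n} - {i, Suc i}" for j
  proof -
    have j: "0 < j" "j \<le> length t" "j \<noteq> i" "j \<noteq> Suc i"
      using that n by auto
    have "dl m j t \<in> D_gens m (n - 1)" "dr m j t \<in> D_gens m (n - 1)"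
      using dl_degenerate[OF i j] dr_degenerate[OF i j] length_dl[OF j(1,2)] length_dr[OF j(1,2)] n
      unfolding D_gens_eq by auto
    moreover have "Poly_Mapping.keys (f j) \<subseteq> {dl m j t, dr m j t}"
      unfolding f_def using keys_diff[of "frag_of (dl m j t)" "frag_of (dr m j t)"]
      by (auto simp: keys_frag_of)
    ultimately show ?thesis
      by blast
  qed
  then show ?thesis
    unfolding boundary using keys_sum[of f "{1..n} - {i, Suc i}"] by blast
qed

end

theorem mainTheorem3:
  fixes m :: "'a \<Rightarrow> 'a \<Rightarrow> 'a"
  assumes "rump_right_quasigroup m"
  shows "\<forall>n. \<forall>c \<in> C_D m (Suc n). YB_boundary m (Suc n) c \<in> C_D m n"
proof (intro allI ballI)
  fix n and c :: "'a list \<Rightarrow>\<^sub>0 int"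
  assume "c \<in> C_D m (Suc n)"
  then have "Poly_Mapping.keys c \<subseteq> D_gens m (Suc n)"
    by (simp add: C_D_eq_span_gen span_gen_eq)
  then have "Poly_Mapping.keys (boundary_gen m (Suc n) t) \<subseteq> D_gens m n"
    if "t \<in> Poly_Mapping.keys c" for t
    using keys_boundary_gen_D_gens[OF assms, of t "Suc n"] that by auto
  then have "Poly_Mapping.keys (YB_boundary m (Suc n) c) \<subseteq> D_gens m n"
    using keys_frag_extend[of "boundary_gen m (Suc n)" c] unfolding YB_boundary_def by blast
  then show "YB_boundary m (Suc n) c \<in> C_D m n"
    by (simp add: C_D_eq_span_gen span_gen_eq)
qed

end
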